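(* Let $m\ge2$, $n=2m+1$, $A_1=E_1+E_{m+1}$, $A_i=E_i+E_{m+i}+E_{i-1,n}+E_{m+i-1,n}$ for $i=2,\dots,m-1$, $A_m=E_m-E_{2m}+E_{m-1,n}+E_{2m-1,n}$, $B=I_{m+1}\oplus0_m$, $c=e_m\in\mathbb R^m$. Let $(D)$ be $\inf\{B\bullet Y:A_i\bullet Y=c_i\ \forall i,\ Y\succeq0\}$ and $(HD)$ the system $A_i\bullet Y=0\ (i=1,\dots,m)$, $B\bullet Y=0$, $Y\succeq0$. Then $d(D)=m-1$ and $d(HD)=m$.
   Context: $E_{ij}\in\mathcal S^n$ has only nonzero entries $1$ in positions $(i,j),(j,i)$; $E_i:=E_{ii}$; $S\bullet T=\operatorname{trace}(ST)$. For a closed convex cone $K$, $K^*=\{y:\langle y,x\rangle\ge0\ \forall x\in K\}$; a face of $K$ is a convex $F\subseteq K$ with $x,y\in K,\frac12(x+y)\in F\Rightarrow x,y\in F$. For an affine subspace $H$ with $H\cap K\ne\emptyset$, $H^\perp=\{y:\langle y,x\rangle=0\ \forall x\in H\}$, the minimal cone of $H\cap K$ is the smallest face of $K$ containing it, and the singularity degree $d(H\cap K)$ is the smallest $k$ such that there exist $y_1,\dots,y_k$ with $y_i\in F_{i-1}^*\cap H^\perp$, where $F_0=K$, $F_i=F_{i-1}\cap y_i^\perp$, and $F_k$ equals the minimal cone. $d(D)$ and $d(HD)$ denote the singularity degrees of the feasible sets of $(D)$ and $(HD)$ (intersections of the corresponding affine/linear subspaces of $\mathcal S^n$ with $\mathcal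 S^n_+$). *)

theory Defs
  imports Complex_Main
begin

text \<open>Matrices are functions nat => nat => real, indexed 1-based as in the paper;
  an element of S^n is a symmetric matrix vanishing outside {1..n} x {1..n}.\<close>

type_synonym mat = "nat \<Rightarrow> nat \<Rightarrow> real"

definition symn :: "nat \<Rightarrow> mat set" where
  "symn n = {X. (\<forall>i j. X i j = X j i) \<and> (\<forall>i j. i \<notin> {1..n} \<or> j \<notin> {1..n} \<longrightarrow> X i j = 0)}"

definition psd :: "nat \<Rightarrow> mat set" where
  "psd n = {X \<in> symn n. \<forall>v :: nat \<Rightarrow> real. (\<Sum>i\<in>{1..n}. \<Sum>j\<in>{1..n}. v i * X i j * v j) \<ge> 0}"

definition mdot :: "nat \<Rightarrow> mat \<Rightarrow> mat \<Rightarrow> real" where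
  "mdot n S T = (\<Sum>i\<in>{1..n}. \<Sum>j\<in>{1..n}. S i j * T j i)"

definition Emat :: "nat \<Rightarrow> nat \<Rightarrow> mat" where
  "Emat i j = (\<lambda>a b. if (a = i \<and> b = j) \<or> (a = j \<and> b = i) then 1 else 0)"

definition dual_cone :: "nat \<Rightarrow> mat set \<Rightarrow> mat set" where
  "dual_cone n K = {Y \<in> symn n. \<forall>X\<in>K. mdot n Y X \<ge> 0}"

definition orth :: "nat \<Rightarrow> mat set \<Rightarrow> mat set" where
  "orth n H = {Y \<in> symn n. \<forall>X\<in>H. mdot n Y X = 0}"

definition mconvex :: "mat set \<Rightarrow> bool" where
  "mconvex F \<longleftrightarrow> (\<forall>X\<in>F. \<forall>Y\<in>F. \<forall>t::real. 0 \<le> t \<and> t \<le> 1 \<longrightarrow>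
      (\<lambda>a b. t * X a b + (1 - t) * Y a b) \<in> F)"

definition is_face :: "mat set \<Rightarrow> mat set \<Rightarrow> bool" where
  "is_face F K \<longleftrightarrow> F \<subseteq> K \<and> mconvex F \<and>
     (\<forall>X\<in>K. \<forall>Y\<in>K. (\<lambda>a b. (1/2) * (X a b + Y a b)) \<in> F \<longrightarrow> X \<in> F \<and> Y \<in> F)"

definition minimal_cone :: "mat set \<Rightarrow> mat set \<Rightarrow> mat set" where
  "minimal_cone H K = \<Inter>{F. is_face F K \<and> H \<inter> K \<subseteq> F}"

fun fr_faces :: "nat \<Rightarrow> mat set \<Rightarrow> (nat \<Rightarrow> mat) \<Rightarrow> nat \<Rightarrow> mat set" where
  "fr_faces n K y 0 = K"
| "fr_faces n K y (Suc i) = fr_faces n K y i \<inter> {X. mdot n (y (Suc i)) X = 0}"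

definition fr_sequence :: "nat \<Rightarrow> mat set \<Rightarrow> mat set \<Rightarrow> nat \<Rightarrow> bool" where
  "fr_sequence n H K k \<longleftrightarrow> (\<exists>y :: nat \<Rightarrow> mat.
      (\<forall>i\<in>{1..k}. y i \<in> dual_cone n (fr_faces n K y (i - 1)) \<inter> orth n H)
      \<and> fr_faces n K y k = minimal_cone H K)"

definition sing_deg :: "nat \<Rightarrow> mat set \<Rightarrow> mat set \<Rightarrow> nat" where
  "sing_deg n H K = (LEAST k. fr_sequence n H K k)"

definition Amat :: "nat \<Rightarrow> nat \<Rightarrow> mat" where
  "Amat m i = (let n = 2*m+1 in
     if i = 1 then (\<lambda>a b. Emat 1 1 a b + Emat (m+1) (m+1) a b)
     else if i = m then (\<lambda>a b. Emat m m a b - Emat (2*m) (2*m) a b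
                                + Emat (m-1) n a b + Emat (2*m-1) n a b)
     else (\<lambda>a b. Emat i i a b + Emat (m+i) (m+i) a b + Emat (i-1) n a b + Emat (m+i-1) n a b))"

definition Bmat :: "nat \<Rightarrow> mat" where
  "Bmat m = (\<lambda>a b. if a = b \<and> 1 \<le> a \<and> a \<le> m+1 then 1 else 0)"

definition cvec :: "nat \<Rightarrow> nat \<Rightarrow> real" where
  "cvec m i = (if i = m then 1 else 0)"

definition H_D :: "nat \<Rightarrow> mat set" where
  "H_D m = {Y \<in> symn (2*m+1). \<forall>i\<in>{1..m}. mdot (2*m+1) (Amat m i) Y = cvec m i}"

definition H_HD :: "nat \<Rightarrow> mat set" where
  "H_HD m = {Y \<in> symn (2*m+1). (\<forall>i\<in>{1..m}. mdot (2*m+1) (Amat m i) Y = 0)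
                              \<and> mdot (2*m+1) (Bmat m) Y = 0}"

end

theory Submission
  imports Defs
begin

text \<open>
  Both facial reduction sequences can be taken along the faces
  \<open>{X \<succeq> 0. X\<^sub>a\<^sub>a = 0 for a \<in> Z}\<close>. For (D) the certificates are \<open>A\<^sub>1, \<dots>, A\<^sub>m\<^sub>-\<^sub>1\<close>
  (orthogonal to \<open>H\<close> as \<open>c\<^sub>i = 0\<close>): on the face reached so far \<open>A\<^sub>j \<bullet> X = X\<^sub>j\<^sub>j + X\<^sub>m\<^sub>+\<^sub>j\<^sub>,\<^sub>m\<^sub>+\<^sub>j\<close>,
  so step \<open>j\<close> kills the indices \<open>j, m+j\<close>. The face after \<open>m - 1\<close> steps is the minimal cone,
  because any of its points becomes feasible after adding a psd multiple of \<open>E\<^sub>m\<close> or \<open>E\<^sub>2\<^sub>m\<close>.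
  For (HD) the certificates \<open>B, A\<^sub>2, \<dots>, A\<^sub>m\<^sub>-\<^sub>1, -A\<^sub>m\<close> kill \<open>1, \<dots>, m+1\<close> and then one
  index per step; after \<open>m\<close> steps the face consists of feasible points.

  For the lower bounds, testing a certificate \<open>y \<in> H\<^sup>\<bottom>\<close> against matrices in the common null
  space of the \<open>A\<^sub>j\<close> gives \<open>y\<^sub>n\<^sub>n = 0\<close> and \<open>|y\<^sub>a\<^sub>a| = |y\<^sub>a\<^sub>-\<^sub>1\<^sub>,\<^sub>n|\<close> for the relevant \<open>a\<close>. If \<open>y\<close> is
  nonnegative on a diagonal face, \<open>y\<^sub>n\<^sub>n = 0\<close> kills its last column there, hence the tied diagonal
  entries, hence everything outside the next zero set. So no sequence can shrink the diagonal face
  faster than the one above, and shorter sequences miss the minimal cone.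
\<close>

lemma mdot_commute: "mdot n S T = mdot n T S"
  unfolding mdot_def by (subst sum.swap) (simp add: mult.commute)

lemma mdot_add_left: "mdot n (\<lambda>a b. S a b + T a b) Y = mdot n S Y + mdot n T Y"
  unfolding mdot_def by (simp add: distrib_right sum.distrib)

lemma mdot_add_right: "mdot n Y (\<lambda>a b. S a b + T a b) = mdot n Y S + mdot n Y T"
  using mdot_add_left mdot_commute by metis

lemma mdot_diff_left: "mdot n (\<lambda>a b. S a b - T a b) Y = mdot n S Y - mdot n T Y"
  unfolding mdot_def by (simp add: left_diff_distrib sum_subtractf)

lemma mdot_neg_left: "mdot n (\<lambda>a b. - S a b) Y = - mdot n S Y"
  unfolding mdot_def by (simp add: sum_negf)

lemma mdot_scale_left: "mdot n (\<lambda>a b. c * S a b) Y = c * mdot n S Y"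
  unfolding mdot_def sum_distrib_left by (simp add: mult.assoc)

lemma Emat_sym: "Emat a b p q = Emat a b q p"
  unfolding Emat_def by auto

lemma Emat_outside: "a \<in> {1..n} \<Longrightarrow> b \<in> {1..n} \<Longrightarrow> p \<notin> {1..n} \<or> q \<notin> {1..n} \<Longrightarrow> Emat a b p q = 0"
  unfolding Emat_def by auto

lemma Emat_symn: "a \<in> {1..n} \<Longrightarrow> b \<in> {1..n} \<Longrightarrow> Emat a b \<in> symn n"
  unfolding symn_def Emat_def by auto

lemma mdot_Emat:
  assumes "a \<in> {1..n}" "b \<in> {1..n}"
  shows "mdot n (Emat a b) Y = (if a = b then Y a a else Y a b + Y b a)"
proof -
  have "mdot n (Emat a b) Y = (\<Sum>i\<in>{1..n}. \<Sum>j\<in>{1..n}. Y j i * (if j = b then (if i = a then 1 else 0) else 0)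
      + Y j i * (if j = a \<and> a \<noteq> b then (if i = b then 1 else 0) else 0))"
    unfolding mdot_def Emat_def by (intro sum.cong) auto
  also have "\<dots> = (if a = b then Y a a else Y a b + Y b a)"
    using assms by (auto simp: sum.distrib if_distrib[where f="\<lambda>x. _ * x"] sum.delta cong: if_cong)
  finally show ?thesis .
qed

lemma quad_form_restrict:
  fixes v :: "nat \<Rightarrow> real"
  assumes "T \<subseteq> {1..n}" "\<And>i. i \<notin> T \<Longrightarrow> v i = 0"
  shows "(\<Sum>i\<in>{1..n}. \<Sum>j\<in>{1..n}. v i * Y i j * v j) = (\<Sum>i\<in>T. \<Sum>j\<in>T. v i * Y i j * v j)"
proof -
  have "(\<Sum>i\<in>{1..n}. \<Sum>j\<in>{1..n}. v i * Y i j * v j) = (\<Sum>i\<in>T. \<Sum>j\<in>{1..n}. v i * Y i j * v j)"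
    by (rule sum.mono_neutral_right) (use assms in auto)
  also have "\<dots> = (\<Sum>i\<in>T. \<Sum>j\<in>T. v i * Y i j * v j)"
    by (intro sum.cong refl sum.mono_neutral_right) (use assms in auto)
  finally show ?thesis .
qed

lemma quad_form_zero_diag_row:
  fixes Y :: mat
  assumes sym: "\<And>i j. Y i j = Y j i"
    and nonneg: "\<And>v. (\<And>i. i \<notin> S \<Longrightarrow> v i = 0) \<Longrightarrow> 0 \<le> (\<Sum>i\<in>{1..n}. \<Sum>j\<in>{1..n}. v i * Y i j * v j)"
    and S: "S \<subseteq> {1..n}" "a \<in> S" "b \<in> S" and zero: "Y a a = 0"
  shows "Y a b = 0"
proof (rule ccontr)
  assume nz: "Y a b \<noteq> 0"
  then have "a \<noteq> b" using zero by auto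
  define s where "s = - (Y b b + 1) / (2 * Y a b)"
  define v where "v = (\<lambda>i. if i = a then s else if i = b then 1 else (0::real))"
  have "0 \<le> (\<Sum>i\<in>{1..n}. \<Sum>j\<in>{1..n}. v i * Y i j * v j)"
    by (rule nonneg) (use S in \<open>auto simp: v_def\<close>)
  also have "\<dots> = (\<Sum>i\<in>{a,b}. \<Sum>j\<in>{a,b}. v i * Y i j * v j)"
    by (rule quad_form_restrict) (use S in \<open>auto simp: v_def\<close>)
  also have "\<dots> = 2 * s * Y a b + Y b b"
    using \<open>a \<noteq> b\<close> zero sym[of b a] by (simp add: v_def algebra_simps)
  also have "\<dots> = -1"
    using nz by (simp add: s_def field_simps)
  finally show False by simp
qed

lemma psd_symmetric: "X \<in> psd n \<Longrightarrow> X i j = X j i"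
  unfolding psd_def symn_def by auto

lemma psd_outside: "X \<in> psd n \<Longrightarrow> i \<notin> {1..n} \<or> j \<notin> {1..n} \<Longrightarrow> X i j = 0"
  unfolding psd_def symn_def by auto

lemma psd_diag_nonneg:
  assumes "X \<in> psd n" shows "0 \<le> X a a"
proof (cases "a \<in> {1..n}")
  case True
  define v where "v = (\<lambda>i. if i = a then 1 else (0::real))"
  have "0 \<le> (\<Sum>i\<in>{1..n}. \<Sum>j\<in>{1..n}. v i * X i j * v j)"
    using assms unfolding psd_def by blast
  also have "\<dots> = (\<Sum>i\<in>{a}. \<Sum>j\<in>{a}. v i * X i j * v j)"
    by (rule quad_form_restrict) (use True in \<open>auto simp: v_def\<close>)
  finally show ?thesis by (simp add: v_def)
qed (simp add: psd_outside[OF assms])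

lemma psd_zero_diag_row:
  assumes "X \<in> psd n" "X a a = 0" shows "X a b = 0" "X b a = 0"
proof -
  show "X a b = 0"
  proof (cases "a \<in> {1..n} \<and> b \<in> {1..n}")
    case True
    show ?thesis
      by (rule quad_form_zero_diag_row[where S = "{1..n}" and n = n])
        (use assms True in \<open>auto simp: psd_def symn_def\<close>)
  qed (auto simp: psd_outside[OF assms(1)])
  then show "X b a = 0" using psd_symmetric[OF assms(1)] by simp
qed

lemma psd_nonneg_comb:
  assumes "X \<in> psd n" "Y \<in> psd n" "0 \<le> c" "0 \<le> d"
  shows "(\<lambda>a b. c * X a b + d * Y a b) \<in> psd n"
proof -
  have "0 \<le> (\<Sum>i\<in>{1..n}. \<Sum>j\<in>{1..n}. v i * (c * X i j + d * Y i j) * v j)" for v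
  proof -
    have "(\<Sum>i\<in>{1..n}. \<Sum>j\<in>{1..n}. v i * (c * X i j + d * Y i j) * v j)
      = c * (\<Sum>i\<in>{1..n}. \<Sum>j\<in>{1..n}. v i * X i j * v j) + d * (\<Sum>i\<in>{1..n}. \<Sum>j\<in>{1..n}. v i * Y i j * v j)"
      by (simp add: algebra_simps sum.distrib sum_distrib_left)
    moreover have "0 \<le> (\<Sum>i\<in>{1..n}. \<Sum>j\<in>{1..n}. v i * X i j * v j)" "0 \<le> (\<Sum>i\<in>{1..n}. \<Sum>j\<in>{1..n}. v i * Y i j * v j)"
      using assms unfolding psd_def by auto
    ultimately show ?thesis using assms by simp
  qed
  then show ?thesis using assms unfolding psd_def symn_def by auto
qed

lemma outer_product_psd:
  fixes v :: "nat \<Rightarrow> real"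
  assumes "\<And>i. i \<notin> {1..n} \<Longrightarrow> v i = 0"
  shows "(\<lambda>a b. v a * v b) \<in> psd n"
proof -
  have "(\<Sum>i\<in>{1..n}. \<Sum>j\<in>{1..n}. w i * (v i * v j) * w j) = (\<Sum>i\<in>{1..n}. w i * v i)\<^sup>2" for w
    by (simp add: power2_eq_square sum_product mult_ac)
  then show ?thesis using assms unfolding psd_def symn_def by auto
qed

lemma Emat_diag_psd:
  assumes "a \<in> {1..n}" shows "Emat a a \<in> psd n"
proof -
  have "Emat a a = (\<lambda>p q. (if p = a then 1 else 0) * (if q = a then 1 else (0::real)))"
    unfolding Emat_def by (intro ext) auto
  also have "\<dots> \<in> psd n" by (rule outer_product_psd) (use assms in auto)
  finally show ?thesis .
qed


section \<open>Diagonal faces\<close>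

definition diag_face :: "nat \<Rightarrow> nat set \<Rightarrow> mat set" where
  "diag_face n Z = {X \<in> psd n. \<forall>a\<in>Z. X a a = 0}"

lemma diag_face_subset_psd: "diag_face n Z \<subseteq> psd n"
  unfolding diag_face_def by auto

lemma diag_face_empty [simp]: "diag_face n {} = psd n"
  unfolding diag_face_def by auto

lemma diag_face_antimono: "Z \<subseteq> Z' \<Longrightarrow> diag_face n Z' \<subseteq> diag_face n Z"
  unfolding diag_face_def by auto

lemma diag_face_zero_row:
  assumes "X \<in> diag_face n Z" "a \<in> Z" shows "X a b = 0" "X b a = 0"
  using assms psd_zero_diag_row[of X n a b] unfolding diag_face_def by auto

lemma diag_face_is_face: "is_face (diag_face n Z) (psd n)"
  unfolding is_face_def
proof (intro conjI diag_face_subset_psd ballI impI)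
  show "mconvex (diag_face n Z)"
    unfolding mconvex_def diag_face_def using psd_nonneg_comb by auto
  fix X Y assume X: "X \<in> psd n" and Y: "Y \<in> psd n"
    and mid: "(\<lambda>a b. 1 / 2 * (X a b + Y a b)) \<in> diag_face n Z"
  have "X a a = 0 \<and> Y a a = 0" if "a \<in> Z" for a
    using mid that psd_diag_nonneg[OF X, of a] psd_diag_nonneg[OF Y, of a]
    unfolding diag_face_def by auto
  then show "X \<in> diag_face n Z" "Y \<in> diag_face n Z"
    using X Y unfolding diag_face_def by auto
qed

lemma face_absorbs_psd_summand:
  assumes F: "is_face F (psd n)" and X: "X \<in> psd n" and R: "R \<in> psd n"
    and sum: "(\<lambda>a b. X a b + R a b) \<in> F"
  shows "X \<in> F"
proof -
  have scaled: "(\<lambda>a b. c * P a b) \<in> psd n" if "P \<in> psd n" "0 \<le> c" for P and c :: real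
    using psd_nonneg_comb[OF that(1) that(1) that(2), of 0] by simp
  have mid: "P \<in> F" if "P \<in> psd n" "Q \<in> psd n" "(\<lambda>a b. 1 / 2 * (P a b + Q a b)) \<in> F" for P Q
    using F that unfolding is_face_def by blast
  \<comment> \<open>\<open>X + R\<close> is the midpoint of \<open>2X\<close> and \<open>2R\<close>, and \<open>2X\<close> the midpoint of \<open>X\<close> and \<open>3X\<close>.\<close>
  have "(\<lambda>a b. 2 * X a b) \<in> F"
  proof (rule mid)
    show "(\<lambda>a b. 1 / 2 * (2 * X a b + 2 * R a b)) \<in> F"
      using sum by (simp add: algebra_simps)
  qed (simp_all add: scaled X R)
  moreover have "(\<lambda>a b. 1 / 2 * (X a b + 3 * X a b)) = (\<lambda>a b. 2 * X a b)"
    by (simp add: algebra_simps)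
  ultimately show ?thesis
    using mid[OF X, of "\<lambda>a b. 3 * X a b"] scaled[OF X, of 3] by simp
qed

lemma diag_face_hyperplane:
  assumes "finite W" and y: "\<forall>X\<in>diag_face n Z. mdot n y X = (\<Sum>a\<in>W. X a a)"
  shows "diag_face n Z \<inter> {X. mdot n y X = 0} = diag_face n (Z \<union> W)"
proof -
  have "mdot n y X = 0 \<longleftrightarrow> (\<forall>a\<in>W. X a a = 0)" if X: "X \<in> diag_face n Z" for X
  proof -
    have "\<forall>a\<in>W. 0 \<le> X a a" using X diag_face_subset_psd psd_diag_nonneg by blast
    then show ?thesis using y X sum_nonneg_eq_0_iff[OF \<open>finite W\<close>, of "\<lambda>a. X a a"] by simp
  qed
  then show ?thesis unfolding diag_face_def by blast
qed

lemma diag_sum_dual_diag_face: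
  assumes "y \<in> symn n" and "\<forall>X\<in>diag_face n Z. mdot n y X = (\<Sum>a\<in>W. X a a)"
  shows "y \<in> dual_cone n (diag_face n Z)"
  using assms psd_diag_nonneg diag_face_subset_psd unfolding dual_cone_def
  by (fastforce intro: sum_nonneg)

lemma mdot_eq_0_on_diag_face:
  assumes X: "X \<in> diag_face n Z" and y: "\<And>a b. a \<in> {1..n} - Z \<Longrightarrow> b \<in> {1..n} - Z \<Longrightarrow> y a b = 0"
  shows "mdot n y X = 0"
  unfolding mdot_def
  by (intro sum.neutral ballI) (metis Diff_iff X diag_face_zero_row mult_eq_0_iff y)

lemma dual_diag_face_zero_diag_row:
  assumes y: "y \<in> dual_cone n (diag_face n Z)"
    and a: "a \<in> {1..n} - Z" and b: "b \<in> {1..n} - Z" and zero: "y a a = 0"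
  shows "y a b = 0"
proof (rule quad_form_zero_diag_row[where S = "{1..n} - Z" and n = n])
  show "y i j = y j i" for i j using y unfolding dual_cone_def symn_def by auto
  fix v :: "nat \<Rightarrow> real" assume v: "\<And>i. i \<notin> {1..n} - Z \<Longrightarrow> v i = 0"
  have "(\<lambda>p q. v p * v q) \<in> diag_face n Z"
    using outer_product_psd[of n v] v unfolding diag_face_def by auto
  then have "0 \<le> mdot n y (\<lambda>p q. v p * v q)" using y unfolding dual_cone_def by auto
  then show "0 \<le> (\<Sum>i\<in>{1..n}. \<Sum>j\<in>{1..n}. v i * y i j * v j)"
    unfolding mdot_def by (simp add: mult_ac)
qed (use a b zero in auto)

text \<open>Off \<open>Z\<close> the certificate \<open>y\<close> is a psd form, so \<open>y n n = 0\<close> kills its last column there;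
  the ties then kill the diagonal off \<open>Z'\<close>, and with it every entry \<open>y a b\<close> with \<open>a, b \<notin> Z'\<close>.\<close>

lemma dual_diag_face_vanishes:
  assumes y: "y \<in> dual_cone n (diag_face n Z)" and "Z \<subseteq> Z'" "0 < n" "n \<notin> Z'"
    and ynn: "y n n = 0"
    and diag: "\<And>a. a \<in> {1..<n} - Z' \<Longrightarrow> \<exists>b\<in>{1..n} - Z. \<bar>y a a\<bar> = \<bar>y b n\<bar>"
  shows "\<forall>X\<in>diag_face n Z'. mdot n y X = 0"
proof
  have sym: "y i j = y j i" for i j using y unfolding dual_cone_def symn_def by auto
  have last_col: "y b n = 0" if "b \<in> {1..n} - Z" for b
    using dual_diag_face_zero_diag_row[OF y _ that ynn] assms(2-4) sym by auto
  have diag0: "y a a = 0" if "a \<in> {1..n} - Z'" for a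
  proof (cases "a = n")
    case False
    with that obtain b where "b \<in> {1..n} - Z" "\<bar>y a a\<bar> = \<bar>y b n\<bar>" using diag by fastforce
    then show ?thesis using last_col by simp
  qed (use ynn in simp)
  fix X assume "X \<in> diag_face n Z'"
  then show "mdot n y X = 0"
    by (rule mdot_eq_0_on_diag_face)
      (use dual_diag_face_zero_diag_row[OF y] diag0 \<open>Z \<subseteq> Z'\<close> in blast)
qed


section \<open>Facial reduction along diagonal faces\<close>

lemma inter_subset_fr_faces:
  assumes "\<forall>i\<in>{1..k}. y i \<in> orth n H"
  shows "H \<inter> K \<subseteq> fr_faces n K y k"
  using assms by (induction k) (auto simp: orth_def)

lemma minimal_cone_eqI:
  assumes "is_face M K" "H \<inter> K \<subseteq> M" "\<And>F. is_face F K \<Longrightarrow> H \<inter> K \<subseteq> F \<Longrightarrow> M \<subseteq> F"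
  shows "minimal_cone H K = M"
  unfolding minimal_cone_def using assms by blast

lemma sing_deg_eqI:
  assumes "fr_sequence n H K k" "\<And>j. j < k \<Longrightarrow> \<not> fr_sequence n H K j"
  shows "sing_deg n H K = k"
  unfolding sing_deg_def by (rule Least_equality) (use assms not_le in auto)

lemma fr_faces_eq_diag_face:
  assumes "Z 0 = {}" and "\<And>i. finite (W i)" and "\<And>i. i < k \<Longrightarrow> Z (Suc i) = Z i \<union> W i"
    and "\<And>i X. i < k \<Longrightarrow> X \<in> diag_face n (Z i) \<Longrightarrow> mdot n (y (Suc i)) X = (\<Sum>a\<in>W i. X a a)"
  shows "i \<le> k \<Longrightarrow> fr_faces n (psd n) y i = diag_face n (Z i)"
proof (induction i)
  case (Suc i)
  then show ?case using diag_face_hyperplane[of "W i" n "Z i" "y (Suc i)"] assms by simp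
qed (simp add: \<open>Z 0 = {}\<close>)

lemma fr_sequence_diag_faces:
  assumes Z0: "Z 0 = {}" and W: "\<And>i. finite (W i)" and Z: "\<And>i. i < k \<Longrightarrow> Z (Suc i) = Z i \<union> W i"
    and y: "\<And>i X. i < k \<Longrightarrow> X \<in> diag_face n (Z i) \<Longrightarrow> mdot n (y (Suc i)) X = (\<Sum>a\<in>W i. X a a)"
    and orth: "\<And>i. i < k \<Longrightarrow> y (Suc i) \<in> orth n H"
    and min: "minimal_cone H (psd n) = diag_face n (Z k)"
  shows "fr_sequence n H (psd n) k"
  unfolding fr_sequence_def
proof (intro exI conjI ballI)
  note faces = fr_faces_eq_diag_face[where Z = Z and W = W and y = y, OF Z0 W Z y]
  fix i assume i: "i \<in> {1..k}"
  then have "i - 1 < k" "Suc (i - 1) = i" by auto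
  then have "y i \<in> orth n H" "\<forall>X\<in>diag_face n (Z (i - 1)). mdot n (y i) X = (\<Sum>a\<in>W (i - 1). X a a)"
    using orth[of "i - 1"] y[of "i - 1"] by auto
  then have "y i \<in> dual_cone n (diag_face n (Z (i - 1)))"
    by (intro diag_sum_dual_diag_face) (auto simp: orth_def)
  then show "y i \<in> dual_cone n (fr_faces n (psd n) y (i - 1)) \<inter> orth n H"
    using \<open>y i \<in> orth n H\<close> \<open>i - 1 < k\<close> faces[of "i - 1"] by simp
next
  show "fr_faces n (psd n) y k = minimal_cone H (psd n)"
    using fr_faces_eq_diag_face[where Z = Z and W = W and y = y, OF Z0 W Z y order_refl] min
    by simp
qed

lemma dual_cone_antimono: "A \<subseteq> B \<Longrightarrow> dual_cone n B \<subseteq> dual_cone n A"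
  unfolding dual_cone_def by auto

lemma diag_face_subset_fr_faces:
  assumes y: "\<forall>i\<in>{1..k}. y i \<in> dual_cone n (fr_faces n (psd n) y (i - 1)) \<inter> orth n H"
    and mono: "\<And>i. Z i \<subseteq> Z (Suc i)"
    and vanish: "\<And>i y'. i < k \<Longrightarrow> y' \<in> orth n H \<Longrightarrow> y' \<in> dual_cone n (diag_face n (Z i)) \<Longrightarrow>
                   \<forall>X\<in>diag_face n (Z (Suc i)). mdot n y' X = 0"
  shows "i \<le> k \<Longrightarrow> diag_face n (Z i) \<subseteq> fr_faces n (psd n) y i"
proof (induction i)
  case 0
  then show ?case using diag_face_subset_psd by simp
next
  case (Suc i)
  then have IH: "diag_face n (Z i) \<subseteq> fr_faces n (psd n) y i" by simp
  have "y (Suc i) \<in> dual_cone n (fr_faces n (psd n) y i) \<inter> orth n H"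
    using y[rule_format, of "Suc i"] Suc.prems by simp
  then have "y (Suc i) \<in> orth n H" "y (Suc i) \<in> dual_cone n (diag_face n (Z i))"
    using dual_cone_antimono[OF IH] by auto
  then have "\<forall>X\<in>diag_face n (Z (Suc i)). mdot n (y (Suc i)) X = 0"
    using Suc.prems by (intro vanish) auto
  moreover have "diag_face n (Z (Suc i)) \<subseteq> fr_faces n (psd n) y i"
    using IH diag_face_antimono[OF mono[of i]] by blast
  ultimately show ?case by auto
qed

lemma not_fr_sequence_diag_faces:
  assumes mono: "\<And>i. Z i \<subseteq> Z (Suc i)"
    and vanish: "\<And>i y'. i < k \<Longrightarrow> y' \<in> orth n H \<Longrightarrow> y' \<in> dual_cone n (diag_face n (Z i)) \<Longrightarrow>
                   \<forall>X\<in>diag_face n (Z (Suc i)). mdot n y' X = 0"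
    and "\<not> diag_face n (Z k) \<subseteq> minimal_cone H (psd n)"
  shows "\<not> fr_sequence n H (psd n) k"
proof
  assume "fr_sequence n H (psd n) k"
  then obtain y where y: "\<forall>i\<in>{1..k}. y i \<in> dual_cone n (fr_faces n (psd n) y (i - 1)) \<inter> orth n H"
    and min: "fr_faces n (psd n) y k = minimal_cone H (psd n)"
    unfolding fr_sequence_def by blast
  have "diag_face n (Z k) \<subseteq> fr_faces n (psd n) y k"
    by (rule diag_face_subset_fr_faces[where Z = Z]) (use y mono vanish in auto)
  with min assms(3) show False by simp
qed


lemma Amat_symn:
  assumes m: "2 \<le> m" and j: "j \<in> {1..m}"
  shows "Amat m j \<in> symn (2*m+1)"
  unfolding symn_def
proof (intro CollectI conjI allI impI)
  fix p q show "Amat m j p q = Amat m j q p"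
    unfolding Amat_def Let_def by (simp add: Emat_sym[of _ _ p q])
next
  fix p q assume pq: "p \<notin> {1..2*m+1} \<or> q \<notin> {1..2*m+1}"
  have E: "\<And>a b. a \<in> {1..2*m+1} \<Longrightarrow> b \<in> {1..2*m+1} \<Longrightarrow> Emat a b p q = 0"
    using pq Emat_outside by blast
  consider "j = 1" | "j = m" | "j \<noteq> 1 \<and> j \<noteq> m" by blast
  then show "Amat m j p q = 0"
  proof cases
    case 1 then show ?thesis using m by (simp add: Amat_def E)
  next
    case 2
    have "Emat (m-1) (2*m+1) p q = 0" "Emat (2*m-1) (2*m+1) p q = 0"
      "Emat m m p q = 0" "Emat (2*m) (2*m) p q = 0" by (rule E; use m in auto)+
    then show ?thesis using 2 m unfolding Amat_def Let_def by simp
  next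
    case 3
    have "Emat (j-1) (2*m+1) p q = 0" "Emat (m+j-1) (2*m+1) p q = 0"
      "Emat j j p q = 0" "Emat (m+j) (m+j) p q = 0" by (rule E; use m j 3 in auto)+
    then show ?thesis using 3 m unfolding Amat_def Let_def by simp
  qed
qed

lemma Bmat_symn: "Bmat m \<in> symn (2*m+1)"
  unfolding symn_def Bmat_def by auto

lemma mdot_Amat:
  assumes m: "2 \<le> m" and j: "j \<in> {1..m}" and sym: "\<And>p q. Y p q = Y q p"
  shows "mdot (2*m+1) (Amat m j) Y = Y j j + (if j = m then -1 else 1) * Y (m+j) (m+j)
           + (if j = 1 then 0 else 2 * (Y (j-1) (2*m+1) + Y (m+j-1) (2*m+1)))"
proof -
  have E: "mdot (2*m+1) (Emat a b) Y = (if a = b then Y a a else 2 * Y a b)"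
    if "a \<in> {1..2*m+1}" "b \<in> {1..2*m+1}" for a b
    using mdot_Emat[OF that] sym[of b a] by simp
  consider "j = 1" | "j = m" | "1 < j" "j < m" using j m by fastforce
  then show ?thesis
  proof cases
    case 1
    then have "mdot (2*m+1) (Amat m j) Y = mdot (2*m+1) (Emat 1 1) Y + mdot (2*m+1) (Emat (m+1) (m+1)) Y"
      by (simp add: Amat_def mdot_add_left)
    also have "\<dots> = Y 1 1 + Y (m+1) (m+1)"
      by (subst (1 2) E) auto
    finally show ?thesis using 1 m by simp
  next
    case 2
    then have "mdot (2*m+1) (Amat m j) Y = mdot (2*m+1) (Emat m m) Y - mdot (2*m+1) (Emat (2*m) (2*m)) Y
        + mdot (2*m+1) (Emat (m-1) (2*m+1)) Y + mdot (2*m+1) (Emat (2*m-1) (2*m+1)) Y"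
      using m by (simp add: Amat_def Let_def mdot_add_left mdot_diff_left)
    also have "\<dots> = Y m m - Y (2*m) (2*m) + 2 * Y (m-1) (2*m+1) + 2 * Y (2*m-1) (2*m+1)"
      using m by (subst (1 2 3 4) E) auto
    finally show ?thesis using 2 m by (simp add: mult_2[of m])
  next
    case 3
    then have "mdot (2*m+1) (Amat m j) Y = mdot (2*m+1) (Emat j j) Y + mdot (2*m+1) (Emat (m+j) (m+j)) Y
        + mdot (2*m+1) (Emat (j-1) (2*m+1)) Y + mdot (2*m+1) (Emat (m+j-1) (2*m+1)) Y"
      using m by (simp add: Amat_def Let_def mdot_add_left)
    also have "\<dots> = Y j j + Y (m+j) (m+j) + 2 * Y (j-1) (2*m+1) + 2 * Y (m+j-1) (2*m+1)"
      using 3 by (subst (1 2 3 4) E) auto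
    finally show ?thesis using 3 by simp
  qed
qed

lemma mdot_Bmat:
  "mdot (2*m+1) (Bmat m) Y = (\<Sum>a\<in>{1..m+1}. Y a a)"
proof -
  have "mdot (2*m+1) (Bmat m) Y = (\<Sum>i\<in>{1..2*m+1}. if i \<le> m+1 then Y i i else 0)"
    unfolding mdot_def Bmat_def
    by (intro sum.cong refl) (auto simp: if_distrib[where f="\<lambda>x. x * _"] sum.delta cong: if_cong)
  also have "\<dots> = (\<Sum>i\<in>{1..2*m+1} \<inter> {i. i \<le> m+1}. Y i i)"
    by (simp add: sum.inter_restrict)
  also have "{1..2*m+1} \<inter> {i. i \<le> m+1} = {1..m+1}" by auto
  finally show ?thesis .
qed

lemma mdot_Amat_diag_face:
  assumes m: "2 \<le> m" and j: "j \<in> {1..m}" and X: "X \<in> diag_face (2*m+1) Z"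
    and Z: "1 < j \<Longrightarrow> j - 1 \<in> Z \<and> m + j - 1 \<in> Z"
  shows "mdot (2*m+1) (Amat m j) X = X j j + (if j = m then -1 else 1) * X (m+j) (m+j)"
proof -
  have sym: "X p q = X q p" for p q
    using X diag_face_subset_psd psd_symmetric by blast
  have "j \<noteq> 1 \<Longrightarrow> X (j-1) (2*m+1) = 0 \<and> X (m+j-1) (2*m+1) = 0"
    using Z j diag_face_zero_row(1)[OF X] by force
  then show ?thesis using mdot_Amat[OF m j sym] by auto
qed

text \<open>\<open>kernel_mat m a\<close> lies in the common null space of the \<open>A\<^sub>j\<close>; paired with a certificate \<open>y\<close>
  it ties the diagonal entry \<open>y a a\<close> to the last-column entry \<open>y (a - 1) n\<close>.\<close>

definition kernel_mat :: "nat \<Rightarrow> nat \<Rightarrow> mat" where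
  "kernel_mat m a = (\<lambda>p q. Emat a a p q - (if a = 2*m then -1 else 1) / 2 * Emat (a-1) (2*m+1) p q)"

lemma kernel_mat_diag: "a \<le> 2*m \<Longrightarrow> kernel_mat m a p p = (if p = a then 1 else 0)"
  unfolding kernel_mat_def Emat_def by auto

lemma kernel_mat_last_col:
  "a \<le> 2*m \<Longrightarrow> p < 2*m+1 \<Longrightarrow>
    kernel_mat m a p (2*m+1) = (if p = a - 1 then - (if a = 2*m then -1 else 1) / 2 else 0)"
  unfolding kernel_mat_def Emat_def by auto

lemma kernel_mat_symn:
  assumes "a \<in> {2..2*m}" shows "kernel_mat m a \<in> symn (2*m+1)"
  using assms unfolding symn_def kernel_mat_def Emat_def by auto

lemma mdot_Amat_kernel_mat:
  assumes m: "2 \<le> m" and j: "j \<in> {1..m}" and a: "a \<in> {2..2*m}" "a \<noteq> m+1"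
  shows "mdot (2*m+1) (Amat m j) (kernel_mat m a) = 0"
proof -
  let ?K = "kernel_mat m a"
  define s :: real where "s = (if a = 2*m then -1 else 1)"
  have sym: "?K p q = ?K q p" for p q
    using kernel_mat_symn[OF a(1)] unfolding symn_def by blast
  have col: "?K (j-1) (2*m+1) = (if j = a then - s / 2 else 0)"
    "?K (m+j-1) (2*m+1) = (if m + j = a then - s / 2 else 0)"
    using j a by (subst kernel_mat_last_col; force simp: s_def)+
  have diag: "?K p p = (if p = a then 1 else 0)" for p
    using a by (simp add: kernel_mat_diag)
  have "mdot (2*m+1) (Amat m j) ?K = ?K j j + (if j = m then -1 else 1) * ?K (m+j) (m+j)
           + (if j = 1 then 0 else 2 * (?K (j-1) (2*m+1) + ?K (m+j-1) (2*m+1)))"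
    by (rule mdot_Amat[OF m j sym])
  also have "\<dots> = (if j = a then 1 else 0) + (if j = m then -1 else 1) * (if m + j = a then 1 else 0)
           + (if j = 1 then 0 else 2 * ((if j = a then - s / 2 else 0) + (if m + j = a then - s / 2 else 0)))"
    by (simp only: col diag)
  also have "\<dots> = 0"
    using m j a by (auto simp: s_def)
  finally show ?thesis .
qed

lemma mdot_kernel_mat:
  assumes y: "y \<in> symn (2*m+1)" and a: "a \<in> {2..2*m}"
  shows "mdot (2*m+1) y (kernel_mat m a) = y a a - (if a = 2*m then -1 else 1) * y (a-1) (2*m+1)"
proof -
  define s :: real where "s = (if a = 2*m then -1 else 1)"
  have "mdot (2*m+1) y (kernel_mat m a) = mdot (2*m+1) (kernel_mat m a) y"
    by (rule mdot_commute)
  also have "\<dots> = mdot (2*m+1) (Emat a a) y - s / 2 * mdot (2*m+1) (Emat (a-1) (2*m+1)) y"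
    unfolding kernel_mat_def s_def[symmetric] by (simp only: mdot_diff_left mdot_scale_left)
  also have "\<dots> = y a a - s * y (a-1) (2*m+1)"
    using a y by (subst (1 2) mdot_Emat) (auto simp: symn_def)
  finally show ?thesis by (simp add: s_def)
qed

lemma Emat_mm_in_H_D:
  assumes m: "2 \<le> m" shows "Emat m m \<in> H_D m"
proof -
  have "mdot (2*m+1) (Amat m j) (Emat m m) = cvec m j" if j: "j \<in> {1..m}" for j
    using mdot_Amat[where Y = "Emat m m", OF m j Emat_sym] m j by (auto simp: Emat_def cvec_def)
  then show ?thesis using m unfolding H_D_def symn_def Emat_def by auto
qed

lemma orth_H_D_null:
  assumes m: "2 \<le> m" and y: "y \<in> orth (2*m+1) (H_D m)" and Z: "Z \<in> symn (2*m+1)"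
    and null: "\<forall>j\<in>{1..m}. mdot (2*m+1) (Amat m j) Z = 0"
  shows "mdot (2*m+1) y Z = 0"
proof -
  let ?P = "Emat m m"
  have "?P \<in> H_D m" by (rule Emat_mm_in_H_D[OF m])
  moreover have "(\<lambda>a b. ?P a b + Z a b) \<in> H_D m"
    using \<open>?P \<in> H_D m\<close> Z null unfolding H_D_def symn_def by (auto simp: mdot_add_right)
  ultimately have "mdot (2*m+1) y ?P = 0" "mdot (2*m+1) y (\<lambda>a b. ?P a b + Z a b) = 0"
    using y unfolding orth_def by blast+
  then show ?thesis by (simp add: mdot_add_right)
qed

lemma orth_H_D_ties:
  assumes m: "2 \<le> m" and y: "y \<in> orth (2*m+1) (H_D m)"
  shows "y (2*m+1) (2*m+1) = 0"
    and "\<And>a. a \<in> {2..2*m} \<Longrightarrow> a \<noteq> m+1 \<Longrightarrow> \<bar>y a a\<bar> = \<bar>y (a-1) (2*m+1)\<bar>"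
proof -
  have ys: "y \<in> symn (2*m+1)" using y unfolding orth_def by auto
  have "\<forall>j\<in>{1..m}. mdot (2*m+1) (Amat m j) (Emat (2*m+1) (2*m+1)) = 0"
    using mdot_Amat[where Y = "Emat (2*m+1) (2*m+1)", OF m _ Emat_sym] m by (auto simp: Emat_def)
  then have "mdot (2*m+1) y (Emat (2*m+1) (2*m+1)) = 0"
    by (intro orth_H_D_null[OF m y] Emat_symn) auto
  then show "y (2*m+1) (2*m+1) = 0"
    using mdot_Emat[where a = "2*m+1" and b = "2*m+1" and n = "2*m+1" and Y = y]
    by (simp add: mdot_commute)
  fix a assume a: "a \<in> {2..2*m}" "a \<noteq> m+1"
  have "mdot (2*m+1) y (kernel_mat m a) = 0"
    using orth_H_D_null[OF m y kernel_mat_symn[OF a(1)]] mdot_Amat_kernel_mat[OF m _ a] by blast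
  then show "\<bar>y a a\<bar> = \<bar>y (a-1) (2*m+1)\<bar>"
    using mdot_kernel_mat[OF ys a(1)] by (auto split: if_splits)
qed

lemma orth_H_HD_ties:
  assumes m: "2 \<le> m" and y: "y \<in> orth (2*m+1) (H_HD m)"
  shows "y (2*m+1) (2*m+1) = 0"
    and "\<And>a. a \<in> {m+2..2*m} \<Longrightarrow> \<bar>y a a\<bar> = \<bar>y (a-1) (2*m+1)\<bar>"
proof -
  have ys: "y \<in> symn (2*m+1)" using y unfolding orth_def by auto
  have "Emat (2*m+1) (2*m+1) \<in> H_HD m"
    using mdot_Amat[where Y = "Emat (2*m+1) (2*m+1)", OF m _ Emat_sym] m
      Emat_symn[where a = "2*m+1" and b = "2*m+1" and n = "2*m+1"]
    unfolding H_HD_def mdot_Bmat by (auto simp: Emat_def)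
  then have "mdot (2*m+1) y (Emat (2*m+1) (2*m+1)) = 0" using y unfolding orth_def by auto
  then show "y (2*m+1) (2*m+1) = 0"
    using mdot_Emat[where a = "2*m+1" and b = "2*m+1" and n = "2*m+1" and Y = y]
    by (simp add: mdot_commute)
  fix a assume a: "a \<in> {m+2..2*m}"
  then have a': "a \<in> {2..2*m}" "a \<noteq> m+1" by auto
  have "kernel_mat m a \<in> H_HD m"
    using kernel_mat_symn[OF a'(1)] mdot_Amat_kernel_mat[OF m _ a'] a
    unfolding H_HD_def mdot_Bmat by (auto simp: kernel_mat_diag)
  then have "mdot (2*m+1) y (kernel_mat m a) = 0" using y unfolding orth_def by auto
  then show "\<bar>y a a\<bar> = \<bar>y (a-1) (2*m+1)\<bar>"
    using mdot_kernel_mat[OF ys a'(1)] by (auto split: if_splits)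
qed


section \<open>The singularity degree of (D)\<close>

definition D_zeros :: "nat \<Rightarrow> nat \<Rightarrow> nat set" where
  "D_zeros m k = {1..k} \<union> {m+1..m+k}"

lemma D_zeros_0 [simp]: "D_zeros m 0 = {}"
  unfolding D_zeros_def by auto

lemma D_zeros_Suc: "D_zeros m (Suc k) = D_zeros m k \<union> {Suc k, m + Suc k}"
  unfolding D_zeros_def by auto

lemma mdot_Amat_D_zeros:
  assumes m: "2 \<le> m" and i: "i < m - 1" and X: "X \<in> diag_face (2*m+1) (D_zeros m i)"
  shows "mdot (2*m+1) (Amat m (Suc i)) X = (\<Sum>a\<in>{Suc i, m + Suc i}. X a a)"
proof -
  have "mdot (2*m+1) (Amat m (Suc i)) X
      = X (Suc i) (Suc i) + (if Suc i = m then -1 else 1) * X (m + Suc i) (m + Suc i)"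
    by (rule mdot_Amat_diag_face[OF m _ X]) (use i in \<open>auto simp: D_zeros_def\<close>)
  moreover have "Suc i \<noteq> m" using i by linarith
  ultimately show ?thesis using m by simp
qed

lemma Amat_orth_H_D:
  assumes m: "2 \<le> m" and j: "j \<in> {1..m-1}"
  shows "Amat m j \<in> orth (2*m+1) (H_D m)"
  using Amat_symn[OF m] j unfolding orth_def H_D_def cvec_def by auto

lemma H_D_diag_face_iff:
  assumes m: "2 \<le> m" and X: "X \<in> diag_face (2*m+1) (D_zeros m (m-1))"
  shows "X \<in> H_D m \<longleftrightarrow> X m m - X (2*m) (2*m) = 1"
proof -
  have A: "mdot (2*m+1) (Amat m j) X = (if j = m then X m m - X (2*m) (2*m) else 0)"
    if j: "j \<in> {1..m}" for j
  proof -
    have "mdot (2*m+1) (Amat m j) X = X j j + (if j = m then -1 else 1) * X (m+j) (m+j)"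
      by (rule mdot_Amat_diag_face[OF m j X]) (use j in \<open>auto simp: D_zeros_def\<close>)
    moreover have "j < m \<Longrightarrow> X j j = 0 \<and> X (m+j) (m+j) = 0"
      using X j unfolding diag_face_def D_zeros_def by auto
    ultimately show ?thesis using j by (auto simp: mult_2)
  qed
  have "X \<in> symn (2*m+1)" using X diag_face_subset_psd unfolding psd_def by auto
  then show ?thesis
    using A m unfolding H_D_def cvec_def by auto
qed

lemma minimal_cone_H_D:
  assumes m: "2 \<le> m"
  shows "minimal_cone (H_D m) (psd (2*m+1)) = diag_face (2*m+1) (D_zeros m (m-1))"
proof (rule minimal_cone_eqI[OF diag_face_is_face])
  have "H_D m \<inter> psd (2*m+1) \<subseteq> fr_faces (2*m+1) (psd (2*m+1)) (Amat m) (m-1)"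
    by (rule inter_subset_fr_faces) (use Amat_orth_H_D[OF m] in auto)
  also have "\<dots> = diag_face (2*m+1) (D_zeros m (m-1))"
    by (rule fr_faces_eq_diag_face[where W = "\<lambda>i. {Suc i, m + Suc i}",
          OF D_zeros_0 _ D_zeros_Suc mdot_Amat_D_zeros[OF m] order_refl]) simp
  finally show "H_D m \<inter> psd (2*m+1) \<subseteq> diag_face (2*m+1) (D_zeros m (m-1))" .
next
  fix F assume F: "is_face F (psd (2*m+1))" and sub: "H_D m \<inter> psd (2*m+1) \<subseteq> F"
  show "diag_face (2*m+1) (D_zeros m (m-1)) \<subseteq> F"
  proof
    fix X assume X: "X \<in> diag_face (2*m+1) (D_zeros m (m-1))"
    then have Xp: "X \<in> psd (2*m+1)" using diag_face_subset_psd by blast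
    \<comment> \<open>Adding a nonnegative multiple of \<open>E\<^sub>m\<close> or \<open>E\<^sub>2\<^sub>m\<close> repairs \<open>X m m - X (2m) (2m) = 1\<close>.\<close>
    define d where "d = 1 - X m m + X (2*m) (2*m)"
    define R where "R = (\<lambda>a b. max d 0 * Emat m m a b + max (- d) 0 * Emat (2*m) (2*m) a b)"
    have R: "R \<in> psd (2*m+1)"
      unfolding R_def by (rule psd_nonneg_comb) (use m Emat_diag_psd in auto)
    let ?Y = "\<lambda>a b. X a b + R a b"
    have Yp: "?Y \<in> psd (2*m+1)"
      using psd_nonneg_comb[OF Xp R, of 1 1] by simp
    have "?Y \<in> diag_face (2*m+1) (D_zeros m (m-1))"
      using X Yp m unfolding diag_face_def D_zeros_def R_def Emat_def by auto
    moreover have "?Y m m - ?Y (2*m) (2*m) = 1"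
      using m unfolding R_def Emat_def d_def by auto
    ultimately have "?Y \<in> H_D m" using H_D_diag_face_iff[OF m] by blast
    then have "?Y \<in> F" using sub Yp by blast
    then show "X \<in> F" by (rule face_absorbs_psd_summand[OF F Xp R])
  qed
qed

lemma D_certificate_vanishes:
  assumes m: "2 \<le> m" and i: "i < m - 2"
    and y: "y \<in> orth (2*m+1) (H_D m)" "y \<in> dual_cone (2*m+1) (diag_face (2*m+1) (D_zeros m i))"
  shows "\<forall>X\<in>diag_face (2*m+1) (D_zeros m (Suc i)). mdot (2*m+1) y X = 0"
proof (rule dual_diag_face_vanishes[OF y(2)])
  show "D_zeros m i \<subseteq> D_zeros m (Suc i)" "2*m+1 \<notin> D_zeros m (Suc i)"
    using i unfolding D_zeros_def by auto
  show "y (2*m+1) (2*m+1) = 0" by (rule orth_H_D_ties(1)[OF m y(1)])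
  fix a assume a: "a \<in> {1..<2*m+1} - D_zeros m (Suc i)"
  then have "a \<in> {2..2*m}" "a \<noteq> m+1" "a - 1 \<in> {1..2*m+1} - D_zeros m i"
    unfolding D_zeros_def by auto
  then show "\<exists>b\<in>{1..2*m+1} - D_zeros m i. \<bar>y a a\<bar> = \<bar>y b (2*m+1)\<bar>"
    using orth_H_D_ties(2)[OF m y(1)] by blast
qed simp

lemma sing_deg_H_D:
  assumes m: "2 \<le> m"
  shows "sing_deg (2*m+1) (H_D m) (psd (2*m+1)) = m - 1"
proof (rule sing_deg_eqI)
  have orth: "\<And>i. i < m - 1 \<Longrightarrow> Amat m (Suc i) \<in> orth (2*m+1) (H_D m)"
    using Amat_orth_H_D[OF m] by simp
  show "fr_sequence (2*m+1) (H_D m) (psd (2*m+1)) (m-1)"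
    by (rule fr_sequence_diag_faces[where W = "\<lambda>i. {Suc i, m + Suc i}",
          OF D_zeros_0 _ D_zeros_Suc mdot_Amat_D_zeros[OF m] orth minimal_cone_H_D[OF m]]) simp
  fix k assume k: "k < m - 1"
  have "Emat (k+1) (k+1) \<in> diag_face (2*m+1) (D_zeros m k)"
    using Emat_diag_psd[of "k+1" "2*m+1"] k unfolding diag_face_def D_zeros_def Emat_def by auto
  moreover have "Emat (k+1) (k+1) \<notin> diag_face (2*m+1) (D_zeros m (m-1))"
    using k unfolding diag_face_def D_zeros_def Emat_def by auto
  ultimately have "\<not> diag_face (2*m+1) (D_zeros m k) \<subseteq> minimal_cone (H_D m) (psd (2*m+1))"
    using minimal_cone_H_D[OF m] by auto
  then show "\<not> fr_sequence (2*m+1) (H_D m) (psd (2*m+1)) k"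
  proof (rule not_fr_sequence_diag_faces[where Z = "D_zeros m", rotated 2])
    show "D_zeros m i \<subseteq> D_zeros m (Suc i)" for i by (auto simp: D_zeros_Suc)
    show "\<forall>X\<in>diag_face (2*m+1) (D_zeros m (Suc i)). mdot (2*m+1) y X = 0"
      if "i < k" "y \<in> orth (2*m+1) (H_D m)" "y \<in> dual_cone (2*m+1) (diag_face (2*m+1) (D_zeros m i))"
      for i y
      by (rule D_certificate_vanishes[OF m _ that(2,3)]) (use that(1) k in simp)
  qed
qed


section \<open>The singularity degree of (HD)\<close>

definition HD_zeros :: "nat \<Rightarrow> nat \<Rightarrow> nat set" where
  "HD_zeros m k = (if k = 0 then {} else {1..m+k})"

definition HD_new_zeros :: "nat \<Rightarrow> nat \<Rightarrow> nat set" where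
  "HD_new_zeros m i = (if i = 0 then {1..m+1} else {m + Suc i})"

text \<open>The last certificate is \<open>-A\<^sub>m\<close>: on the preceding face \<open>A\<^sub>m \<bullet> X = -X\<^sub>2\<^sub>m\<^sub>,\<^sub>2\<^sub>m\<close>.\<close>

definition HD_certificate :: "nat \<Rightarrow> nat \<Rightarrow> mat" where
  "HD_certificate m i =
    (if i = 1 then Bmat m else if i = m then (\<lambda>a b. - Amat m m a b) else Amat m i)"

lemma HD_zeros_0 [simp]: "HD_zeros m 0 = {}"
  unfolding HD_zeros_def by simp

lemma HD_zeros_Suc: "HD_zeros m (Suc i) = HD_zeros m i \<union> HD_new_zeros m i"
  unfolding HD_zeros_def HD_new_zeros_def by auto

lemma finite_HD_new_zeros: "finite (HD_new_zeros m i)"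
  unfolding HD_new_zeros_def by simp

lemma mdot_HD_certificate:
  assumes m: "2 \<le> m" and i: "i < m" and X: "X \<in> diag_face (2*m+1) (HD_zeros m i)"
  shows "mdot (2*m+1) (HD_certificate m (Suc i)) X = (\<Sum>a\<in>HD_new_zeros m i. X a a)"
proof (cases "i = 0")
  case True
  then show ?thesis using mdot_Bmat[of m X] by (simp add: HD_certificate_def HD_new_zeros_def)
next
  case False
  have "mdot (2*m+1) (Amat m (Suc i)) X
      = X (Suc i) (Suc i) + (if Suc i = m then -1 else 1) * X (m + Suc i) (m + Suc i)"
    by (rule mdot_Amat_diag_face[OF m _ X]) (use i False in \<open>auto simp: HD_zeros_def\<close>)
  moreover have "X (Suc i) (Suc i) = 0"
    using X False i unfolding diag_face_def HD_zeros_def by auto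
  ultimately show ?thesis
    using False by (auto simp: HD_certificate_def HD_new_zeros_def mdot_neg_left)
qed

lemma HD_certificate_orth:
  assumes m: "2 \<le> m" and i: "i \<in> {1..m}"
  shows "HD_certificate m i \<in> orth (2*m+1) (H_HD m)"
  using Amat_symn[OF m] Bmat_symn i m
  unfolding orth_def H_HD_def HD_certificate_def symn_def
  by (auto simp: mdot_neg_left)

lemma diag_face_HD_subset_H_HD:
  assumes m: "2 \<le> m"
  shows "diag_face (2*m+1) (HD_zeros m m) \<subseteq> H_HD m"
proof
  fix X assume X: "X \<in> diag_face (2*m+1) (HD_zeros m m)"
  have zero: "X a a = 0" if "a \<in> {1..2*m}" for a
    using X that m unfolding diag_face_def HD_zeros_def by auto
  have "mdot (2*m+1) (Amat m j) X = 0" if j: "j \<in> {1..m}" for j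
  proof -
    have "mdot (2*m+1) (Amat m j) X = X j j + (if j = m then -1 else 1) * X (m+j) (m+j)"
      by (rule mdot_Amat_diag_face[OF m j X]) (use j m in \<open>auto simp: HD_zeros_def\<close>)
    then show ?thesis using zero j by simp
  qed
  moreover have "mdot (2*m+1) (Bmat m) X = 0"
    unfolding mdot_Bmat using zero m by simp
  moreover have "X \<in> symn (2*m+1)" using X diag_face_subset_psd unfolding psd_def by auto
  ultimately show "X \<in> H_HD m" unfolding H_HD_def by auto
qed

lemma minimal_cone_H_HD:
  assumes m: "2 \<le> m"
  shows "minimal_cone (H_HD m) (psd (2*m+1)) = diag_face (2*m+1) (HD_zeros m m)"
proof (rule minimal_cone_eqI[OF diag_face_is_face])
  have "H_HD m \<inter> psd (2*m+1) \<subseteq> fr_faces (2*m+1) (psd (2*m+1)) (HD_certificate m) m"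
    by (rule inter_subset_fr_faces) (use HD_certificate_orth[OF m] in auto)
  also have "\<dots> = diag_face (2*m+1) (HD_zeros m m)"
    by (rule fr_faces_eq_diag_face[OF HD_zeros_0 finite_HD_new_zeros HD_zeros_Suc
          mdot_HD_certificate[OF m] order_refl])
  finally show "H_HD m \<inter> psd (2*m+1) \<subseteq> diag_face (2*m+1) (HD_zeros m m)" .
  show "diag_face (2*m+1) (HD_zeros m m) \<subseteq> F" if "H_HD m \<inter> psd (2*m+1) \<subseteq> F" for F
    using that diag_face_HD_subset_H_HD[OF m] diag_face_subset_psd by blast
qed

lemma HD_certificate_vanishes:
  assumes m: "2 \<le> m" and i: "i < m - 1"
    and y: "y \<in> orth (2*m+1) (H_HD m)" "y \<in> dual_cone (2*m+1) (diag_face (2*m+1) (HD_zeros m i))"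
  shows "\<forall>X\<in>diag_face (2*m+1) (HD_zeros m (Suc i)). mdot (2*m+1) y X = 0"
proof (rule dual_diag_face_vanishes[OF y(2)])
  show "HD_zeros m i \<subseteq> HD_zeros m (Suc i)" "2*m+1 \<notin> HD_zeros m (Suc i)"
    using i unfolding HD_zeros_def by auto
  show "y (2*m+1) (2*m+1) = 0" by (rule orth_H_HD_ties(1)[OF m y(1)])
  fix a assume a: "a \<in> {1..<2*m+1} - HD_zeros m (Suc i)"
  then have "a \<in> {m+2..2*m}" "a - 1 \<in> {1..2*m+1} - HD_zeros m i"
    unfolding HD_zeros_def by auto
  then show "\<exists>b\<in>{1..2*m+1} - HD_zeros m i. \<bar>y a a\<bar> = \<bar>y b (2*m+1)\<bar>"
    using orth_H_HD_ties(2)[OF m y(1)] by blast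
qed simp

lemma sing_deg_H_HD:
  assumes m: "2 \<le> m"
  shows "sing_deg (2*m+1) (H_HD m) (psd (2*m+1)) = m"
proof (rule sing_deg_eqI)
  have orth: "\<And>i. i < m \<Longrightarrow> HD_certificate m (Suc i) \<in> orth (2*m+1) (H_HD m)"
    using HD_certificate_orth[OF m] by simp
  show "fr_sequence (2*m+1) (H_HD m) (psd (2*m+1)) m"
    by (rule fr_sequence_diag_faces[OF HD_zeros_0 finite_HD_new_zeros HD_zeros_Suc
          mdot_HD_certificate[OF m] orth minimal_cone_H_HD[OF m]])
  fix k assume k: "k < m"
  have "Emat (2*m) (2*m) \<in> diag_face (2*m+1) (HD_zeros m k)"
    using Emat_diag_psd[of "2*m" "2*m+1"] k m unfolding diag_face_def HD_zeros_def Emat_def by auto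
  moreover have "Emat (2*m) (2*m) \<notin> diag_face (2*m+1) (HD_zeros m m)"
    using m unfolding diag_face_def HD_zeros_def Emat_def by auto
  ultimately have "\<not> diag_face (2*m+1) (HD_zeros m k) \<subseteq> minimal_cone (H_HD m) (psd (2*m+1))"
    using minimal_cone_H_HD[OF m] by auto
  then show "\<not> fr_sequence (2*m+1) (H_HD m) (psd (2*m+1)) k"
  proof (rule not_fr_sequence_diag_faces[where Z = "HD_zeros m", rotated 2])
    show "HD_zeros m i \<subseteq> HD_zeros m (Suc i)" for i by (auto simp: HD_zeros_Suc)
    show "\<forall>X\<in>diag_face (2*m+1) (HD_zeros m (Suc i)). mdot (2*m+1) y X = 0"
      if "i < k" "y \<in> orth (2*m+1) (H_HD m)" "y \<in> dual_cone (2*m+1) (diag_face (2*m+1) (HD_zeros m i))"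
      for i y
      by (rule HD_certificate_vanishes[OF m _ that(2,3)]) (use that(1) k in simp)
  qed
qed

theorem theorem3:
  fixes m :: nat
  assumes "m \<ge> 2"
  shows "sing_deg (2*m+1) (H_D m) (psd (2*m+1)) = m - 1
       \<and> sing_deg (2*m+1) (H_HD m) (psd (2*m+1)) = m"
  using sing_deg_H_D[OF assms] sing_deg_H_HD[OF assms] by simp

end
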